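(* Let $N\geq 0$ be an integer. For every real $t\neq 0$, \[ (-1)^N\left(\frac{\tanh t}{t}-\sum_{j=1}^{N}\frac{2^{2j}(2^{2j}-1)B_{2j}}{(2j)!}t^{2j-2}\right)>0 . \] In particular, for every integer $m\geq 1$ and real $t\neq0$, \[ \sum_{j=1}^{2m}\frac{2^{2j}(2^{2j}-1)B_{2j}}{(2j)!}t^{2j-2}<\frac{\tanh t}{t}<\sum_{j=1}^{2m-1}\frac{2^{2j}(2^{2j}-1)B_{2j}}{(2j)!}t^{2j-2}. \]
   Context: The Bernoulli numbers $B_n$ are defined by $\frac{t}{e^t-1}=\sum_{n=0}^\infty B_n\frac{t^n}{n!}$ for $|t|<2\pi$. An empty sum is understood to be zero. *)

theory Defs
  imports "HOL-Analysis.Analysis" "HOL-Computational_Algebra.Formal_Power_Series"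
begin

text \<open>Bernoulli numbers: B n = n! times the n-th Taylor coefficient of t/(e^t - 1).
  The power series of (e^t - 1)/t is sum_n t^n/(n+1)!, and t/(e^t-1) is its
  (formal power series) inverse; this agrees with the analytic expansion for |t| < 2 pi.\<close>

definition bernoulli_num :: "nat \<Rightarrow> real" where
  "bernoulli_num n = fact n * fps_nth (inverse (Abs_fps (\<lambda>k. 1 / fact (Suc k)))) n"

end

theory Submission
  imports Defs
begin

(* Write a_k = ((2k+1) pi)^2. The reflection formula for the digamma function gives the partial
   fraction expansion tanh t / t = sum_k 8 / (a_k + 4t^2). Expanding each summand geometrically up
   to order N with exact remainder gives
     tanh t / t = sum_{i<N} 8 (-4t^2)^i sum_k a_k^-(i+1)  +  (-4t^2)^N R_N(4t^2),
   where R_N(x) = sum_k 8 / (a_k^N (a_k + x)) > 0, so (-1)^N times the truncation error is positive.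
   The coefficients are recognised as the Bernoulli terms through t tanh t = t + B(4t) - B(2t) with
   B(x) = x / (e^x - 1), which gives the power series of tanh t / t in terms of Bernoulli numbers;
   a convergent power series is determined by any asymptotic expansion at 0. *)

section \<open>Partial fractions of tanh\<close>

lemma tanh_complex_of_real: "tanh (complex_of_real t) = of_real (tanh t)"
  unfolding tanh_altdef by (simp add: exp_of_real flip: of_real_minus)

lemma cot_pi_half_plus_i_times: "cot (complex_of_real (pi/2) + \<i> * of_real t) = - \<i> * of_real (tanh t)"
proof -
  have "cot (complex_of_real (pi/2) + \<i> * of_real t) = - tan (\<i> * of_real t)"
    by (simp add: cot_def tan_def sin_add cos_add flip: sin_of_real cos_of_real)
  also have "\<dots> = - \<i> * of_real (tanh t)"
    by (simp add: tan_conv_tanh tanh_complex_of_real)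
  finally show ?thesis .
qed

lemma sin_pi_times_nonzero:
  fixes z :: complex assumes "z \<notin> \<int>" shows "sin (of_real pi * z) \<noteq> 0"
proof
  assume "sin (of_real pi * z) = 0"
  then obtain n :: int where "of_real pi * z = of_real pi * of_int n"
    by (auto simp: sin_eq_0 mult.commute)
  hence "z = of_int n" by simp
  with assms show False by simp
qed

lemma Digamma_reflection:
  fixes z :: complex assumes z: "z \<notin> \<int>"
  shows "Digamma (1 - z) - Digamma z = of_real pi * cot (of_real pi * z)"
proof -
  define f where "f w = Gamma w * Gamma (1 - w) * sin (of_real pi * w)" for w :: complex
  have f_const: "f w = of_real pi" if "w \<in> - \<int>" for w
    using that sin_pi_times_nonzero[of w] Gamma_reflection_complex[of w] by (simp add: f_def)
  have f_deriv_0: "(f has_field_derivative 0) (at z)"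
  proof (rule has_field_derivative_transform_within_open[of "\<lambda>_. of_real pi" 0 z "- \<int>"])
    show "open (- \<int> :: complex set)" by (simp add: open_Compl)
  qed (use z f_const in auto)
  have nonpos: "z \<notin> \<int>\<^sub>\<le>\<^sub>0" "1 - z \<notin> \<int>\<^sub>\<le>\<^sub>0"
  proof -
    have "1 - z \<notin> \<int>" using z Ints_diff[of 1 "1 - z"] by auto
    with z show "z \<notin> \<int>\<^sub>\<le>\<^sub>0" "1 - z \<notin> \<int>\<^sub>\<le>\<^sub>0" by (auto dest: nonpos_Ints_Int)
  qed
  have "(f has_field_derivative
      (Gamma z * Digamma z * Gamma (1 - z) * sin (of_real pi * z)
       - Gamma z * (Gamma (1 - z) * Digamma (1 - z)) * sin (of_real pi * z)
       + Gamma z * Gamma (1 - z) * (cos (of_real pi * z) * of_real pi))) (at z)"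
    unfolding f_def using nonpos by (auto intro!: derivative_eq_intros simp: algebra_simps)
  from DERIV_unique[OF this f_deriv_0]
  have "Gamma z * Gamma (1 - z) * (sin (of_real pi * z) * (Digamma z - Digamma (1 - z))
      + of_real pi * cos (of_real pi * z)) = 0"
    by (simp add: algebra_simps)
  moreover have "Gamma z * Gamma (1 - z) \<noteq> 0" using nonpos by (simp add: Gamma_eq_zero_iff)
  ultimately have "sin (of_real pi * z) * (Digamma z - Digamma (1 - z)) + of_real pi * cos (of_real pi * z) = 0"
    by simp
  with sin_pi_times_nonzero[OF z] show ?thesis by (simp add: cot_def field_simps)
qed

lemma cot_partial_fractions:
  fixes z :: complex assumes "z \<notin> \<int>"
  shows "(\<lambda>k. inverse (z + of_nat k) - inverse (1 - z + of_nat k)) sums (of_real pi * cot (of_real pi * z))"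
proof -
  have nz: "z \<noteq> 0" "1 - z \<noteq> 0" using assms by auto
  have "(\<lambda>k. inverse (of_nat (Suc k)) - inverse (w + of_nat k)) sums (Digamma w + euler_mascheroni)"
    if "w \<noteq> 0" for w :: complex
    using summable_Digamma[OF that] by (simp add: Digamma_def summable_sums)
  from sums_diff[OF this[OF nz(2)] this[OF nz(1)]]
  have "(\<lambda>k. inverse (z + of_nat k) - inverse (1 - z + of_nat k)) sums (Digamma (1 - z) - Digamma z)"
    by simp
  thus ?thesis unfolding Digamma_reflection[OF assms] .
qed

lemma tanh_partial_fraction_summand:
  fixes t :: real
  defines "z \<equiv> complex_of_real (1/2) + \<i> * of_real (t / pi)"
  shows "inverse (z + of_nat k) - inverse (1 - z + of_nat k)
    = - \<i> * of_real pi * of_real (8 * t / (((2 * real k + 1) * pi)^2 + 4 * t^2))"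
proof -
  define c where "c = real k + 1/2"
  define w where "w = \<i> * of_real (t / pi)"
  define D where "D = ((2 * real k + 1) * pi)^2 + 4 * t^2"
  have "D > 0" unfolding D_def by (intro add_pos_nonneg) auto
  have z_plus: "z + of_nat k = of_real c + w" and one_minus_z_plus: "1 - z + of_nat k = of_real c - w"
    by (simp_all add: z_def c_def w_def algebra_simps)
  have "(of_real c + w) * (of_real c - w) = of_real (c^2 + (t / pi)^2)"
    by (simp add: w_def algebra_simps power2_eq_square)
  also have "c^2 + (t / pi)^2 = D / (4 * pi^2)"
    unfolding c_def D_def by (simp add: field_simps power2_eq_square)
  finally have prod: "(of_real c + w) * (of_real c - w) = of_real (D / (4 * pi^2))" .
  hence "of_real c + w \<noteq> 0" "of_real c - w \<noteq> 0" using \<open>D > 0\<close> by auto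
  hence "inverse (of_real c + w) - inverse (of_real c - w) = - 2 * w / ((of_real c + w) * (of_real c - w))"
    by (simp add: field_simps)
  also have "\<dots> = - \<i> * of_real (2 * t / pi / (D / (4 * pi^2)))"
    unfolding prod by (simp add: w_def)
  also have "2 * t / pi / (D / (4 * pi^2)) = pi * (8 * t / D)"
    using \<open>D > 0\<close> by (simp add: field_simps power2_eq_square)
  finally show ?thesis unfolding z_plus one_minus_z_plus D_def by simp
qed

lemma tanh_partial_fractions:
  fixes t :: real
  shows "(\<lambda>k. 8 * t / (((2 * real k + 1) * pi)^2 + 4 * t^2)) sums tanh t"
proof -
  define z where "z = complex_of_real (1/2) + \<i> * of_real (t / pi)"
  have "z \<notin> \<int>"
  proof
    assume "z \<in> \<int>"
    then obtain n :: int where "z = of_int n" by (auto elim: Ints_cases)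
    hence "Re z = of_int n" by simp
    hence "2 * of_int n = (1::real)" by (simp add: z_def)
    hence "2 * n = 1" by linarith
    thus False by presburger
  qed
  have "of_real pi * z = complex_of_real (pi/2) + \<i> * of_real t"
    by (simp add: z_def algebra_simps)
  hence "of_real pi * cot (of_real pi * z) = (- \<i> * of_real pi) * of_real (tanh t)"
    using cot_pi_half_plus_i_times[of t] by simp
  with cot_partial_fractions[OF \<open>z \<notin> \<int>\<close>]
  have "(\<lambda>k. (- \<i> * of_real pi) * of_real (8 * t / (((2 * real k + 1) * pi)^2 + 4 * t^2)))
      sums ((- \<i> * of_real pi) * of_real (tanh t))"
    by (simp only: tanh_partial_fraction_summand[of t, folded z_def])
  moreover have "- \<i> * complex_of_real pi \<noteq> 0" by simp
  ultimately have "(\<lambda>k. complex_of_real (8 * t / (((2 * real k + 1) * pi)^2 + 4 * t^2))) sums of_real (tanh t)"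
    using sums_mult_iff by blast
  thus ?thesis by (simp only: sums_of_real_iff)
qed

section \<open>Expansion of tanh t / t with remainder\<close>

definition odd_pi_sq :: "nat \<Rightarrow> real" where
  "odd_pi_sq k = ((2 * real k + 1) * pi)^2"

(* odd_power_sum m = lambda(2m) / pi^(2m) for Dirichlet's lambda(s) = sum_k (2k+1)^-s *)
definition odd_power_sum :: "nat \<Rightarrow> real" where
  "odd_power_sum m = (\<Sum>k. 1 / odd_pi_sq k ^ m)"

definition tanh_remainder :: "nat \<Rightarrow> real \<Rightarrow> real" where
  "tanh_remainder N x = (\<Sum>k. 8 / (odd_pi_sq k ^ N * (odd_pi_sq k + x)))"

lemma odd_pi_sq_ge: "odd_pi_sq k \<ge> (real k + 1)^2"
proof -
  have "real k + 1 \<le> (2 * real k + 1) * 1" by simp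
  also have "\<dots> \<le> (2 * real k + 1) * pi" using pi_gt3 by (intro mult_left_mono) auto
  finally show ?thesis unfolding odd_pi_sq_def by (intro power_mono) auto
qed

lemma odd_pi_sq_ge_1: "odd_pi_sq k \<ge> 1"
  using odd_pi_sq_ge[of k] by (smt (verit) one_le_power of_nat_0_le_iff)

lemma tanh_remainder_summand_bounds:
  assumes "x \<ge> 0"
  shows "0 < 8 / (odd_pi_sq k ^ N * (odd_pi_sq k + x))"
    and "8 / (odd_pi_sq k ^ N * (odd_pi_sq k + x)) \<le> 8 / (real k + 1)^2"
proof -
  have a: "odd_pi_sq k \<ge> 1" by (rule odd_pi_sq_ge_1)
  show "0 < 8 / (odd_pi_sq k ^ N * (odd_pi_sq k + x))" using a assms by simp
  have "(real k + 1)^2 \<le> odd_pi_sq k" by (rule odd_pi_sq_ge)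
  also have "\<dots> = 1 * odd_pi_sq k" by simp
  also have "\<dots> \<le> odd_pi_sq k ^ N * (odd_pi_sq k + x)"
    using a assms by (intro mult_mono one_le_power) auto
  finally have "(real k + 1)^2 \<le> odd_pi_sq k ^ N * (odd_pi_sq k + x)" .
  thus "8 / (odd_pi_sq k ^ N * (odd_pi_sq k + x)) \<le> 8 / (real k + 1)^2"
    using a assms by (intro divide_left_mono mult_pos_pos) auto
qed

lemma summable_tanh_remainder:
  assumes "x \<ge> 0" shows "summable (\<lambda>k. 8 / (odd_pi_sq k ^ N * (odd_pi_sq k + x)))"
proof (rule summable_comparison_test)
  show "\<exists>N0. \<forall>k\<ge>N0. norm (8 / (odd_pi_sq k ^ N * (odd_pi_sq k + x))) \<le> 8 / (real k + 1)^2"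
    using tanh_remainder_summand_bounds[OF assms] by (auto simp: less_imp_le)
  show "summable (\<lambda>k. 8 / (real k + 1)^2)"
    using summable_mult[OF sums_summable[OF inverse_squares_sums], of 8] by (simp add: add.commute)
qed

lemma summable_odd_power_sum:
  assumes "m \<ge> 1" shows "summable (\<lambda>k. 1 / odd_pi_sq k ^ m)"
proof -
  obtain N where m: "m = Suc N" using assms by (cases m) auto
  from summable_divide[OF summable_tanh_remainder[of 0 N], of 8]
  show ?thesis unfolding m by (simp add: mult.commute)
qed

lemma tanh_remainder_pos: "x \<ge> 0 \<Longrightarrow> tanh_remainder N x > 0"
  unfolding tanh_remainder_def by (intro suminf_pos summable_tanh_remainder tanh_remainder_summand_bounds)

lemma tanh_remainder_le:
  assumes "x \<ge> 0" shows "tanh_remainder N x \<le> tanh_remainder N 0"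
proof -
  have "8 / (odd_pi_sq k ^ N * (odd_pi_sq k + x)) \<le> 8 / (odd_pi_sq k ^ N * (odd_pi_sq k + 0))" for k
    using odd_pi_sq_ge_1[of k] assms by (intro divide_left_mono mult_left_mono mult_pos_pos) auto
  thus ?thesis
    unfolding tanh_remainder_def using assms by (intro suminf_le summable_tanh_remainder) auto
qed

lemma inverse_add_geometric_expansion:
  fixes a x :: "'a::field"
  assumes "a \<noteq> 0" "a + x \<noteq> 0"
  shows "1 / (a + x) = (\<Sum>i<N. (-x)^i / a^(i+1)) + (-x)^N / (a^N * (a + x))"
proof (induction N)
  case (Suc N)
  have "(-x)^N / (a^N * (a + x)) = (-x)^N / a^(N+1) + (-x)^(Suc N) / (a^(Suc N) * (a + x))"
    using assms by (simp add: divide_simps) (simp add: algebra_simps)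
  with Suc show ?case by simp
qed simp

lemma tanh_div_expansion:
  fixes t :: real assumes "t \<noteq> 0"
  shows "tanh t / t = (\<Sum>i<N. 8 * (-4*t^2)^i * odd_power_sum (i+1)) + (-4*t^2)^N * tanh_remainder N (4*t^2)"
proof -
  define x where "x = 4*t^2"
  have x: "x \<ge> 0" by (simp add: x_def)
  have "(\<lambda>k. 8 * t / (odd_pi_sq k + x) / t) sums (tanh t / t)"
    unfolding odd_pi_sq_def x_def by (intro sums_divide tanh_partial_fractions)
  hence "tanh t / t = (\<Sum>k. 8 / (odd_pi_sq k + x))"
    using assms by (simp add: sums_iff)
  also have "\<dots> = (\<Sum>k. (\<Sum>i<N. 8 * (-x)^i * (1 / odd_pi_sq k^(i+1))) + (-x)^N * (8 / (odd_pi_sq k^N * (odd_pi_sq k + x))))"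
  proof (rule arg_cong[where f = suminf], rule ext)
    fix k
    have "odd_pi_sq k \<noteq> 0" "odd_pi_sq k + x \<noteq> 0" using odd_pi_sq_ge_1[of k] x by auto
    from arg_cong[OF inverse_add_geometric_expansion[OF this, of N], of "(*) 8"]
    show "8 / (odd_pi_sq k + x) = (\<Sum>i<N. 8 * (-x)^i * (1 / odd_pi_sq k^(i+1))) + (-x)^N * (8 / (odd_pi_sq k^N * (odd_pi_sq k + x)))"
      by (simp add: sum_distrib_left ring_distribs)
  qed
  also have "\<dots> = (\<Sum>k. (\<Sum>i<N. 8 * (-x)^i * (1 / odd_pi_sq k^(i+1)))) + (\<Sum>k. (-x)^N * (8 / (odd_pi_sq k^N * (odd_pi_sq k + x))))"
    by (intro suminf_add[symmetric] summable_sum summable_mult summable_odd_power_sum summable_tanh_remainder x) auto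
  also have "(\<Sum>k. (\<Sum>i<N. 8 * (-x)^i * (1 / odd_pi_sq k^(i+1)))) = (\<Sum>i<N. (\<Sum>k. 8 * (-x)^i * (1 / odd_pi_sq k^(i+1))))"
    by (rule suminf_sum) (intro summable_mult summable_odd_power_sum, simp)
  also have "\<dots> = (\<Sum>i<N. 8 * (-x)^i * odd_power_sum (i+1))"
    unfolding odd_power_sum_def by (intro sum.cong refl suminf_mult summable_odd_power_sum) simp
  also have "(\<Sum>k. (-x)^N * (8 / (odd_pi_sq k^N * (odd_pi_sq k + x)))) = (-x)^N * tanh_remainder N x"
    unfolding tanh_remainder_def by (rule suminf_mult, rule summable_tanh_remainder, rule x)
  finally show ?thesis by (simp add: x_def)
qed

section \<open>The power series of tanh t / t\<close>

definition bernoulli_fps :: "real fps" where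
  "bernoulli_fps = inverse (Abs_fps (\<lambda>k. 1 / fact (Suc k)))"

lemma bernoulli_num_conv_bernoulli_fps: "bernoulli_num n = fact n * fps_nth bernoulli_fps n"
  by (simp add: bernoulli_num_def bernoulli_fps_def)

lemma bernoulli_fps_mult_exp_quotient: "bernoulli_fps * Abs_fps (\<lambda>k. 1 / fact (Suc k)) = 1"
  unfolding bernoulli_fps_def by (rule inverse_mult_eq_1) simp

lemma bernoulli_fps_times_exp_minus_1:
  "(fps_exp c - 1) * (bernoulli_fps oo (fps_const c * fps_X)) = fps_const c * fps_X"
proof -
  define E :: "real fps" where "E = Abs_fps (\<lambda>k. 1 / fact (Suc k))"
  have "fps_X * E = fps_exp 1 - 1"
  proof (rule fps_ext)
    show "fps_nth (fps_X * E) n = fps_nth (fps_exp 1 - 1) n" for n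
      by (cases n) (simp_all add: E_def fps_exp_def)
  qed
  from arg_cong[OF this, of "\<lambda>F. F oo (fps_const c * fps_X)"]
  have XE: "(fps_const c * fps_X) * (E oo (fps_const c * fps_X)) = fps_exp c - 1"
    by (simp add: fps_compose_mult_distrib fps_compose_sub_distrib)
  from arg_cong[OF bernoulli_fps_mult_exp_quotient[folded E_def], of "\<lambda>F. F oo (fps_const c * fps_X)"]
  have BE: "(bernoulli_fps oo (fps_const c * fps_X)) * (E oo (fps_const c * fps_X)) = 1"
    by (simp add: fps_compose_mult_distrib)
  have "(fps_exp c - 1) * (bernoulli_fps oo (fps_const c * fps_X))
      = fps_const c * fps_X * ((bernoulli_fps oo (fps_const c * fps_X)) * (E oo (fps_const c * fps_X)))"
    unfolding XE[symmetric] by (simp only: ac_simps)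
  with BE show ?thesis by simp
qed

lemma bernoulli_fps_nth_0_1: "fps_nth bernoulli_fps 0 = 1" "fps_nth bernoulli_fps 1 = - 1/2"
proof -
  define E :: "real fps" where "E = Abs_fps (\<lambda>k. 1 / fact (Suc k))"
  have "fps_nth (bernoulli_fps * E) 0 = 1" "fps_nth (bernoulli_fps * E) 1 = 0"
    by (simp_all add: bernoulli_fps_mult_exp_quotient[folded E_def])
  thus "fps_nth bernoulli_fps 0 = 1" "fps_nth bernoulli_fps 1 = - 1/2"
    by (simp_all add: fps_mult_nth E_def numeral_2_eq_2)
qed

definition tanh_over_X_fps :: "real fps" where
  "tanh_over_X_fps = Abs_fps (\<lambda>n. 2^(n+2) * (2^(n+2) - 1) * fps_nth bernoulli_fps (n+2))"

lemma fps_X_times_fps_X_times_tanh_over_X_fps: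
  "fps_X * fps_X * tanh_over_X_fps
     = fps_X + (bernoulli_fps oo (fps_const 4 * fps_X)) - (bernoulli_fps oo (fps_const 2 * fps_X))"
proof (rule fps_ext)
  fix n
  show "fps_nth (fps_X * fps_X * tanh_over_X_fps) n
      = fps_nth (fps_X + (bernoulli_fps oo (fps_const 4 * fps_X)) - (bernoulli_fps oo (fps_const 2 * fps_X))) n"
  proof (cases "n < 2")
    case True
    hence "n = 0 \<or> n = 1" by auto
    thus ?thesis using bernoulli_fps_nth_0_1 by (auto simp: mult.assoc)
  next
    case False
    define m where "m = n - 2"
    have n: "n = m + 2" using False by (simp add: m_def)
    have "(4::real) ^ n = 2 ^ n * 2 ^ n" by (simp flip: power_mult_distrib)
    hence "2 ^ n * (2 ^ n - 1) * fps_nth bernoulli_fps n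
        = 4 ^ n * fps_nth bernoulli_fps n - 2 ^ n * fps_nth bernoulli_fps n"
      by (simp add: algebra_simps)
    thus ?thesis unfolding n by (simp add: mult.assoc tanh_over_X_fps_def)
  qed
qed

lemma tanh_fps_identity:
  "fps_X * tanh_over_X_fps * (fps_exp 2 + 1) = fps_exp (2::real) - 1"
proof -
  define E where "E = fps_exp (2::real)"
  define A where "A = bernoulli_fps oo (fps_const 2 * fps_X)"
  define B where "B = bernoulli_fps oo (fps_const 4 * fps_X)"
  have hA: "(E - 1) * A = 2 * fps_X"
    using bernoulli_fps_times_exp_minus_1[of 2] by (simp add: E_def A_def numeral_fps_const)
  have "fps_exp (4::real) = E * E" unfolding E_def using fps_exp_add_mult[of 2 2] by simp
  hence hB: "(E * E - 1) * B = 4 * fps_X"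
    using bernoulli_fps_times_exp_minus_1[of 4] by (simp add: B_def numeral_fps_const)
  \<comment> \<open>multiplying by \<open>E - 1\<close> turns \<open>A\<close> and \<open>B\<close> into polynomials in \<open>fps_X\<close> and \<open>E\<close>\<close>
  have "(E - 1) * ((fps_X + B - A) * (E + 1))
      = fps_X * (E * E - 1) + (E * E - 1) * B - (E + 1) * ((E - 1) * A)"
    by (simp add: algebra_simps)
  also have "\<dots> = (E - 1) * (fps_X * (E - 1))"
    unfolding hA hB by (simp add: algebra_simps)
  finally have "(fps_X + B - A) * (E + 1) = fps_X * (E - 1)"
  proof (rule mult_left_cancel[THEN iffD1, rotated])
    have "fps_nth (E - 1) 1 \<noteq> 0" by (simp add: E_def fps_exp_def)
    thus "E - 1 \<noteq> 0" by auto
  qed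
  hence "fps_X * (fps_X * tanh_over_X_fps * (E + 1)) = fps_X * (E - 1)"
    by (simp only: mult.assoc[symmetric] fps_X_times_fps_X_times_tanh_over_X_fps A_def B_def)
  thus ?thesis by (simp add: E_def)
qed

lemma tanh_conv_exp: "tanh (x::real) = (exp (2*x) - 1) / (exp (2*x) + 1)"
proof -
  have "tanh x = (exp x - inverse (exp x)) / (exp x + inverse (exp x))"
    by (simp add: tanh_altdef exp_minus)
  also have "\<dots> = ((exp x * exp x - 1) / exp x) / ((exp x * exp x + 1) / exp x)"
    by (simp add: field_simps)
  also have "\<dots> = (exp x * exp x - 1) / (exp x * exp x + 1)"
    by simp
  also have "exp x * exp x = exp (2*x)" by (simp flip: exp_add)
  finally show ?thesis .
qed

lemma tanh_has_fps_expansion: "tanh has_fps_expansion (fps_X * tanh_over_X_fps)"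
proof -
  have unit: "fps_nth (fps_exp (2::real) + 1) 0 \<noteq> 0" by (simp add: fps_exp_def)
  have "(\<lambda>x::real. (exp (2*x) - 1) / (exp (2*x) + 1)) has_fps_expansion (fps_exp 2 - 1) / (fps_exp 2 + 1)"
    using unit by (intro has_fps_expansion_divide' has_fps_expansion_diff has_fps_expansion_add
        has_fps_expansion_exp has_fps_expansion_1) simp_all
  also have "(fps_exp (2::real) - 1) / (fps_exp 2 + 1) = fps_X * tanh_over_X_fps"
    using unit by (simp add: fps_divide_unit mult.assoc inverse_mult_eq_1' flip: tanh_fps_identity)
  finally show ?thesis by (simp add: tanh_conv_exp[abs_def])
qed

lemma tanh_over_X_fps_expansion:
  "fps_conv_radius tanh_over_X_fps > 0"
  "eventually (\<lambda>t. eval_fps tanh_over_X_fps t = tanh t / t) (at (0::real))"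
proof -
  have "fps_X * tanh_over_X_fps \<noteq> 0"
  proof
    assume "fps_X * tanh_over_X_fps = 0"
    hence "fps_nth (fps_exp (2::real) - 1) 1 = 0" by (simp flip: tanh_fps_identity)
    thus False by (simp add: fps_exp_def)
  qed
  hence "1 \<le> subdegree (fps_X * tanh_over_X_fps)" by (intro subdegree_geI) auto
  from has_fps_expansion_shift[OF tanh_has_fps_expansion this refl]
  have "(\<lambda>t. if t = 0 then fps_nth (fps_X * tanh_over_X_fps) 1 else tanh t / t ^ 1)
      has_fps_expansion fps_shift 1 (fps_X * tanh_over_X_fps)" .
  also have "fps_shift 1 (fps_X * tanh_over_X_fps) = tanh_over_X_fps"
    by (subst mult.commute) (rule fps_shift_times_fps_X')
  finally have "(\<lambda>t. if t = 0 then fps_nth (fps_X * tanh_over_X_fps) 1 else tanh t / t ^ 1)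
      has_fps_expansion tanh_over_X_fps" .
  thus "fps_conv_radius tanh_over_X_fps > 0"
    and "eventually (\<lambda>t. eval_fps tanh_over_X_fps t = tanh t / t) (at (0::real))"
    by (auto simp: has_fps_expansion_def eventually_at_filter elim: eventually_mono)
qed

section \<open>Identification of the coefficients\<close>

lemma eval_fps_conv_shift:
  fixes F :: "'a::{banach, real_normed_field} fps"
  assumes "norm z < fps_conv_radius F"
  shows "eval_fps F z = (\<Sum>i<n. fps_nth F i * z^i) + z^n * eval_fps (fps_shift n F) z"
proof -
  have "(\<lambda>i. fps_nth F (i + n) * z^(i + n)) sums (eval_fps F z - (\<Sum>i<n. fps_nth F i * z^i))"
    using sums_split_initial_segment[OF sums_eval_fps[OF assms]] .
  moreover have "(\<lambda>i. fps_nth F (i + n) * z^(i + n)) sums (z^n * eval_fps (fps_shift n F) z)"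
    using sums_mult[OF sums_eval_fps[of z "fps_shift n F"], of "z^n"] assms
    by (simp add: power_add algebra_simps)
  ultimately show ?thesis
    using sums_unique2 by (metis add_diff_cancel_left' diff_add_cancel)
qed

lemma fps_nth_eq_of_asymptotic_expansion:
  fixes F :: "'a::{banach, real_normed_field} fps"
  assumes radius: "fps_conv_radius F > 0"
    and eval: "eventually (\<lambda>t. eval_fps F t = f t) (at 0)"
    and bound: "\<And>n. \<exists>C. eventually (\<lambda>t. norm (f t - (\<Sum>i<n. q i * t^i)) \<le> C * norm t ^ n) (at 0)"
  shows "fps_nth F n = q n"
proof (induction n rule: less_induct)
  case (less n)
  define G where "G = fps_shift n F"
  obtain C where C: "eventually (\<lambda>t. norm (f t - (\<Sum>i<Suc n. q i * t^i)) \<le> C * norm t ^ Suc n) (at 0)"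
    using bound by blast
  have "eventually (\<lambda>t. t \<in> eball 0 (fps_conv_radius F)) (at 0)"
    using radius by (intro eventually_at_in_open') (auto simp: zero_ereal_def)
  moreover have "eventually (\<lambda>t. t \<noteq> 0) (at (0::'a))" by (simp add: eventually_at_filter)
  ultimately have "eventually (\<lambda>t. norm (eval_fps G t - q n) \<le> C * norm t) (at 0)"
    using C eval
  proof eventually_elim
    case (elim t)
    have "(\<Sum>i<n. fps_nth F i * t^i) = (\<Sum>i<n. q i * t^i)"
      using less.IH by simp
    with elim have "f t - (\<Sum>i<Suc n. q i * t^i) = t^n * (eval_fps G t - q n)"
      using eval_fps_conv_shift[of t F n] by (simp add: G_def algebra_simps)
    with elim have "norm t ^ n * norm (eval_fps G t - q n) \<le> norm t ^ n * (C * norm t)"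
      by (simp add: norm_mult norm_power ac_simps)
    thus ?case using \<open>t \<noteq> 0\<close> by simp
  qed
  hence "((\<lambda>t. eval_fps G t - q n) \<longlongrightarrow> 0) (at 0)"
    by (rule Lim_null_comparison) (auto intro!: tendsto_eq_intros)
  hence "(eval_fps G \<longlongrightarrow> q n) (at 0)" by (simp add: LIM_zero_iff)
  moreover have "(eval_fps G \<longlongrightarrow> fps_nth F n) (at 0)"
  proof -
    have "isCont (eval_fps G) 0"
      using radius by (intro continuous_eval_fps) (simp add: G_def zero_ereal_def)
    thus ?thesis by (simp add: isCont_def eval_fps_at_0 G_def)
  qed
  ultimately show ?case by (rule tendsto_unique[OF at_neq_bot, rotated])
qed

definition tanh_taylor_coeff :: "nat \<Rightarrow> real" where
  "tanh_taylor_coeff n = (if even n then 8 * (-4)^(n div 2) * odd_power_sum (n div 2 + 1) else 0)"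

lemma sum_tanh_taylor_coeff:
  "(\<Sum>i<2*N. tanh_taylor_coeff i * t^i) = (\<Sum>i<N. 8 * (-4*t^2)^i * odd_power_sum (i+1))"
proof (induction N)
  case (Suc N)
  have "(-4*t^2)^N = (-4)^N * t^(2*N)"
    by (metis power_mult power_mult_distrib)
  hence "tanh_taylor_coeff (2*N) * t^(2*N) = 8 * (-4*t^2)^N * odd_power_sum (N+1)"
    by (simp add: tanh_taylor_coeff_def)
  moreover have "tanh_taylor_coeff (2*N + 1) = 0" by (simp add: tanh_taylor_coeff_def)
  ultimately show ?case using Suc by simp
qed simp

lemma tanh_div_asymptotic:
  "\<exists>C. eventually (\<lambda>t. norm (tanh t / t - (\<Sum>i<n. tanh_taylor_coeff i * t^i)) \<le> C * norm t ^ n) (at 0)"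
proof -
  define N where "N = (n + 1) div 2"
  have "n \<le> 2*N" by (simp add: N_def)
  have partial: "(\<Sum>i<n. tanh_taylor_coeff i * t^i) = (\<Sum>i<N. 8 * (-4*t^2)^i * odd_power_sum (i+1))" for t
  proof -
    have "(\<Sum>i<n. tanh_taylor_coeff i * t^i) = (\<Sum>i<2*N. tanh_taylor_coeff i * t^i)"
    proof (cases "even n")
      case False
      hence "2*N = Suc n" by (simp add: N_def)
      moreover have "tanh_taylor_coeff n = 0" using False by (simp add: tanh_taylor_coeff_def)
      ultimately show ?thesis by simp
    qed (simp add: N_def)
    thus ?thesis by (simp only: sum_tanh_taylor_coeff)
  qed
  have "norm (tanh t / t - (\<Sum>i<n. tanh_taylor_coeff i * t^i)) \<le> (4^N * tanh_remainder N 0) * norm t ^ n"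
    if "t \<noteq> 0" "dist t 0 < 1" for t :: real
  proof -
    have R: "0 < tanh_remainder N (4*t^2)" "tanh_remainder N (4*t^2) \<le> tanh_remainder N 0"
      by (auto intro: tanh_remainder_pos tanh_remainder_le)
    have "tanh t / t - (\<Sum>i<n. tanh_taylor_coeff i * t^i) = (-4*t^2)^N * tanh_remainder N (4*t^2)"
      using tanh_div_expansion[OF \<open>t \<noteq> 0\<close>, of N] by (simp add: partial)
    moreover have "\<bar>(-4*t^2)^N\<bar> = 4^N * \<bar>t\<bar>^(2*N)"
      by (simp add: power_abs power_mult power_mult_distrib)
    ultimately have "norm (tanh t / t - (\<Sum>i<n. tanh_taylor_coeff i * t^i))
        = 4^N * \<bar>t\<bar>^(2*N) * tanh_remainder N (4*t^2)"
      using R by (simp add: abs_mult)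
    also have "\<dots> \<le> 4^N * \<bar>t\<bar>^n * tanh_remainder N 0"
    proof (intro mult_mono mult_left_mono)
      show "\<bar>t\<bar>^(2*N) \<le> \<bar>t\<bar>^n"
        using that \<open>n \<le> 2*N\<close> by (intro power_decreasing) auto
    qed (use R in auto)
    finally show ?thesis by (simp add: ac_simps)
  qed
  hence "eventually (\<lambda>t. norm (tanh t / t - (\<Sum>i<n. tanh_taylor_coeff i * t^i)) \<le> (4^N * tanh_remainder N 0) * norm t ^ n) (at 0)"
    by (auto simp: eventually_at intro!: exI[of _ 1])
  thus ?thesis ..
qed

lemma fps_nth_tanh_over_X_fps: "fps_nth tanh_over_X_fps n = tanh_taylor_coeff n"
  by (rule fps_nth_eq_of_asymptotic_expansion[OF tanh_over_X_fps_expansion tanh_div_asymptotic])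

definition tanh_bernoulli_sum :: "nat \<Rightarrow> real \<Rightarrow> real" where
  "tanh_bernoulli_sum N t =
     (\<Sum>j=1..N. 2 ^ (2*j) * (2 ^ (2*j) - 1) * bernoulli_num (2*j) / fact (2*j) * t ^ (2*j - 2))"

lemma tanh_bernoulli_coeff:
  assumes "j \<ge> 1"
  shows "2 ^ (2*j) * (2 ^ (2*j) - 1) * bernoulli_num (2*j) / fact (2*j) = 8 * (-4)^(j-1) * odd_power_sum j"
proof -
  obtain i where j: "j = Suc i" using assms by (cases j) auto
  have "2 ^ (2*j) * (2 ^ (2*j) - 1) * bernoulli_num (2*j) / fact (2*j) = fps_nth tanh_over_X_fps (2*i)"
    by (simp add: j bernoulli_num_conv_bernoulli_fps tanh_over_X_fps_def)
  also have "\<dots> = 8 * (-4)^(j-1) * odd_power_sum j"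
    by (simp add: fps_nth_tanh_over_X_fps tanh_taylor_coeff_def j)
  finally show ?thesis .
qed

lemma tanh_div_minus_bernoulli_sum:
  fixes t :: real assumes "t \<noteq> 0"
  shows "(-1) ^ N * (tanh t / t - tanh_bernoulli_sum N t) = (4*t^2)^N * tanh_remainder N (4*t^2)"
proof -
  have "tanh_bernoulli_sum N t = (\<Sum>j=1..N. 8 * (-4)^(j-1) * odd_power_sum j * t ^ (2*j - 2))"
    unfolding tanh_bernoulli_sum_def by (intro sum.cong refl) (simp add: tanh_bernoulli_coeff)
  also have "\<dots> = (\<Sum>i<N. 8 * (-4)^i * odd_power_sum (i+1) * t^(2*i))"
    by (simp add: sum.atLeast1_atMost_eq)
  also have "\<dots> = (\<Sum>i<N. 8 * (-4*t^2)^i * odd_power_sum (i+1))"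
  proof (intro sum.cong refl)
    fix i
    have "(-4*t^2)^i = (-4)^i * t^(2*i)"
      by (metis power_mult power_mult_distrib)
    thus "8 * (-4)^i * odd_power_sum (i+1) * t^(2*i) = 8 * (-4*t^2)^i * odd_power_sum (i+1)"
      by simp
  qed
  finally have "tanh t / t - tanh_bernoulli_sum N t = (-4*t^2)^N * tanh_remainder N (4*t^2)"
    using tanh_div_expansion[OF assms, of N] by simp
  moreover have "(-1::real)^N * (-4*t^2)^N = (4*t^2)^N"
    unfolding power_mult_distrib[symmetric] by simp
  ultimately show ?thesis by (simp only: mult.assoc[symmetric])
qed

lemma tanh_div_minus_bernoulli_sum_alternating:
  fixes t :: real assumes "t \<noteq> 0"
  shows "(-1) ^ N * (tanh t / t - tanh_bernoulli_sum N t) > 0"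
  unfolding tanh_div_minus_bernoulli_sum[OF assms] using assms by (simp add: tanh_remainder_pos)

theorem corollary1:
  shows "(\<forall>(N::nat) (t::real). t \<noteq> 0 \<longrightarrow>
           (-1) ^ N * (tanh t / t -
             (\<Sum>j=1..N. 2 ^ (2*j) * (2 ^ (2*j) - 1) * bernoulli_num (2*j) / fact (2*j) * t ^ (2*j - 2))) > 0)
       \<and> (\<forall>(m::nat) (t::real). m \<ge> 1 \<longrightarrow> t \<noteq> 0 \<longrightarrow>
           (\<Sum>j=1..2*m. 2 ^ (2*j) * (2 ^ (2*j) - 1) * bernoulli_num (2*j) / fact (2*j) * t ^ (2*j - 2)) < tanh t / t
         \<and> tanh t / t < (\<Sum>j=1..2*m-1. 2 ^ (2*j) * (2 ^ (2*j) - 1) * bernoulli_num (2*j) / fact (2*j) * t ^ (2*j - 2)))"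
  unfolding tanh_bernoulli_sum_def[symmetric]
proof (intro conjI allI impI)
  fix N :: nat and t :: real
  assume "t \<noteq> 0"
  thus "(-1) ^ N * (tanh t / t - tanh_bernoulli_sum N t) > 0"
    by (rule tanh_div_minus_bernoulli_sum_alternating)
next
  fix m :: nat and t :: real
  assume "t \<noteq> 0"
  thus "tanh_bernoulli_sum (2*m) t < tanh t / t"
    using tanh_div_minus_bernoulli_sum_alternating[of t "2*m"] by simp
next
  fix m :: nat and t :: real
  assume "m \<ge> 1" "t \<noteq> 0"
  moreover have "odd (2*m - 1)" using \<open>m \<ge> 1\<close> by presburger
  ultimately show "tanh t / t < tanh_bernoulli_sum (2*m - 1) t"
    using tanh_div_minus_bernoulli_sum_alternating[of t "2*m - 1"] by simp
qed

end
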